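(* Suppose there exist $R>r>0$ such that $g(x)\le\min\{Rx+g(x^* )-Rx^*,\ rx+g(x^* )-rx^*\}$ for all $x\in[0,1]$. Then for every $c\ge1/(R-r)$, $$\lambda g(x^* )-\sup_{\mathbf x\in[0,1]^c}\mathcal R(\mathbf x)\ \ge\ \lambda\min\{1,r/2\}\,x^*\sqrt{(R-r)/c}.$$
   Context: Setting. Fix $c\in\mathbb N$ (number of identical units of a single reusable resource), an arrival rate $\lambda>0$ and a mean usage duration $d>0$, with $x^*:=c/(\lambda d)\in(0,1)$. Let $g:[0,1]\to\mathbb R$ be concave, non-decreasing, with $g(0)=0$ (the reward function). A stock-dependent policy is a vector $\mathbf x=(x_1,\dots,x_c)\in[0,1]^c$, where $x_j$ is the admission probability used when exactly $j$ units are available (the admission probability is $0$ when no unit is available). Its steady-state distribution is the unique probability vector $\pi=(\pi_0,\dots,\pi_c)$ satisfying $\pi_j\lambda x_j=\pi_{j-1}(c-j+1)/d$ for all $j\in\{1,\dots,c\}$, and its long-run average reward is $\mathcal R(\mathbf x)=\sum_{j=1}^c\pi_j\lambda g(x_j)$. *)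

theory Defs
  imports "HOL-Analysis.Analysis"
begin

text \<open>Steady-state (balance) conditions for a stock-dependent policy x
  (x j = admission probability when j units are available, j = 1..c).
  p is a probability vector on {0..c} (extended by 0 beyond c).\<close>
definition steady_state ::
  "nat \<Rightarrow> real \<Rightarrow> real \<Rightarrow> (nat \<Rightarrow> real) \<Rightarrow> (nat \<Rightarrow> real) \<Rightarrow> bool" where
  "steady_state c lam d x p \<longleftrightarrow>
     (\<forall>j\<le>c. 0 \<le> p j) \<and> (\<forall>j>c. p j = 0) \<and> (\<Sum>j\<le>c. p j) = 1 \<and>
     (\<forall>j\<in>{1..c}. p j * lam * x j = p (j - 1) * real (c - j + 1) / d)"

definition stat_dist ::
  "nat \<Rightarrow> real \<Rightarrow> real \<Rightarrow> (nat \<Rightarrow> real) \<Rightarrow> (nat \<Rightarrow> real)" where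
  "stat_dist c lam d x = (THE p. steady_state c lam d x p)"

definition avg_reward ::
  "nat \<Rightarrow> real \<Rightarrow> real \<Rightarrow> (real \<Rightarrow> real) \<Rightarrow> (nat \<Rightarrow> real) \<Rightarrow> real" where
  "avg_reward c lam d g x = (\<Sum>j=1..c. stat_dist c lam d x j * lam * g (x j))"

text \<open>Policies: [0,1]^c, coordinates indexed by 1..c (other coordinates irrelevant).\<close>
definition policies :: "nat \<Rightarrow> (nat \<Rightarrow> real) set" where
  "policies c = {x. \<forall>j\<in>{1..c}. 0 \<le> x j \<and> x j \<le> 1}"

end

theory Submission
  imports Defs
begin

text \<open>Only the two linear majorants of g are used.
  Against them, an arrival at a level with admission probability x_j (x_0 = 0) loses at least
  r (x* - x_j) + (R - r) max 0 (x* - x_j). Since admissions balance departures, the mean shortfall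
  \<Sum> \<pi>_j (x* - x_j) equals x* m / c, where m is the mean number of available units, and the
  balance equations bound x* \<pi>_k by the mean positive shortfall V for every k. A small V thus
  forces all \<pi>_k \<le> V / x* and hence a large m; comparing the two losses at the scale
  K = sqrt (c (R - r)) gives x* min 1 (r/2) sqrt ((R - r) / c) per unit arrival rate.\<close>

text \<open>The unnormalised solution of the balance equations, restarted at 1 at every level whose
  admission probability is 0. Only the last restart matters: the balance equations force the
  stationary mass below that level to vanish.\<close>
primrec balance_weight :: "nat \<Rightarrow> real \<Rightarrow> real \<Rightarrow> (nat \<Rightarrow> real) \<Rightarrow> nat \<Rightarrow> real" where
  "balance_weight c lam d x 0 = 1"
| "balance_weight c lam d x (Suc j) = (if x (Suc j) = 0 then 1
      else balance_weight c lam d x j * real (c - j) / (d * lam * x (Suc j)))"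

definition last_blocked_level :: "nat \<Rightarrow> (nat \<Rightarrow> real) \<Rightarrow> nat" where
  "last_blocked_level c x = Max (insert 0 {j\<in>{1..c}. x j = 0})"

definition stat_dist_formula :: "nat \<Rightarrow> real \<Rightarrow> real \<Rightarrow> (nat \<Rightarrow> real) \<Rightarrow> nat \<Rightarrow> real" where
  "stat_dist_formula c lam d x j =
     (if last_blocked_level c x \<le> j \<and> j \<le> c
      then balance_weight c lam d x j / (\<Sum>i=last_blocked_level c x..c. balance_weight c lam d x i)
      else 0)"

lemma
  shows last_blocked_level_le: "last_blocked_level c x \<le> c"
    and last_blocked_level_blocked: "last_blocked_level c x = 0 \<or> x (last_blocked_level c x) = 0"
    and admission_nonzero_above_last_blocked:
      "last_blocked_level c x < j \<Longrightarrow> j \<le> c \<Longrightarrow> x j \<noteq> 0"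
proof -
  let ?B = "insert 0 {j\<in>{1..c}. x j = 0}"
  have fin: "finite ?B" by simp
  show "last_blocked_level c x \<le> c"
    unfolding last_blocked_level_def using fin by (auto intro!: Max.boundedI)
  have "last_blocked_level c x \<in> ?B"
    unfolding last_blocked_level_def using fin Max_in by blast
  then show "last_blocked_level c x = 0 \<or> x (last_blocked_level c x) = 0" by auto
  assume "last_blocked_level c x < j" "j \<le> c"
  moreover have "j \<le> last_blocked_level c x" if "j \<in> ?B"
    unfolding last_blocked_level_def using that fin by simp
  ultimately show "x j \<noteq> 0" by auto
qed

lemma balance_weight_last_blocked: "balance_weight c lam d x (last_blocked_level c x) = 1"
  using last_blocked_level_blocked[of c x] by (cases "last_blocked_level c x") auto

lemma balance_weight_nonneg:
  assumes "x \<in> policies c" "lam > 0" "d > 0" "j \<le> c"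
  shows "balance_weight c lam d x j \<ge> 0"
  using assms(4)
proof (induction j)
  case (Suc j)
  then have "x (Suc j) \<ge> 0" using assms(1) unfolding policies_def by auto
  with Suc assms show ?case by (auto intro!: divide_nonneg_pos mult_nonneg_nonneg)
qed simp

lemma steady_state_balance:
  assumes "steady_state c lam d x p" "j < c"
  shows "p (Suc j) * lam * x (Suc j) = p j * real (c - j) / d"
proof -
  have "c - Suc j + 1 = c - j" using assms(2) by simp
  then show ?thesis using assms unfolding steady_state_def by (auto dest!: bspec[of _ _ "Suc j"])
qed

lemma steady_state_zero_below_last_blocked:
  assumes st: "steady_state c lam d x p" and d: "d > 0" and j: "j < last_blocked_level c x"
  shows "p j = 0"
proof -
  let ?k = "last_blocked_level c x"
  have propagate: "p n = 0" if "n < ?k" and "p (Suc n) * lam * x (Suc n) = 0" for n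
    using steady_state_balance[OF st, of n] that last_blocked_level_le[of c x] d by simp
  from j have "j \<le> ?k - 1" by simp
  then show ?thesis
  proof (induction j rule: inc_induct)
    case base
    have "x ?k = 0" using j last_blocked_level_blocked[of c x] by auto
    then show ?case using propagate[of "?k - 1"] j by simp
  next
    case (step n)
    then show ?case using propagate[of n] by simp
  qed
qed

lemma steady_state_above_last_blocked:
  assumes st: "steady_state c lam d x p" and lam: "lam > 0" and d: "d > 0"
    and j: "last_blocked_level c x \<le> j" "j \<le> c"
  shows "p j = p (last_blocked_level c x) * balance_weight c lam d x j"
  using j
proof (induction j rule: dec_induct)
  case base
  then show ?case by (simp add: balance_weight_last_blocked)
next
  case (step n)
  then have "x (Suc n) \<noteq> 0"
    using admission_nonzero_above_last_blocked[of c x "Suc n"] j by simp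
  moreover have "p (Suc n) * lam * x (Suc n) = p n * real (c - n) / d"
    using steady_state_balance[OF st, of n] step j by simp
  ultimately show ?case using step lam d by (simp add: field_simps)
qed

lemma steady_state_unique:
  assumes st: "steady_state c lam d x p" and lam: "lam > 0" and d: "d > 0"
  shows "p = stat_dist_formula c lam d x"
proof
  fix j
  let ?k = "last_blocked_level c x" and ?w = "balance_weight c lam d x"
  have sum1: "(\<Sum>j\<le>c. p j) = 1" and above_c: "\<forall>j>c. p j = 0"
    using st unfolding steady_state_def by auto
  have "(\<Sum>j\<le>c. p j) = (\<Sum>j=?k..c. p j)"
    using steady_state_zero_below_last_blocked[OF st d] by (intro sum.mono_neutral_right) auto
  also have "\<dots> = (\<Sum>j=?k..c. p ?k * ?w j)"
    by (intro sum.cong refl steady_state_above_last_blocked[OF st lam d]) auto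
  also have "\<dots> = p ?k * (\<Sum>j=?k..c. ?w j)"
    by (simp add: sum_distrib_left)
  finally have "p ?k * (\<Sum>j=?k..c. ?w j) = 1" using sum1 by simp
  then have p_last_blocked: "p ?k = 1 / (\<Sum>j=?k..c. ?w j)"
    by (metis eq_divide_eq mult_zero_right zero_neq_one)
  show "p j = stat_dist_formula c lam d x j"
  proof (cases "?k \<le> j \<and> j \<le> c")
    case True
    then show ?thesis
      using steady_state_above_last_blocked[OF st lam d, of j] p_last_blocked
      unfolding stat_dist_formula_def by simp
  next
    case False
    then show ?thesis
      using steady_state_zero_below_last_blocked[OF st d, of j] above_c
      unfolding stat_dist_formula_def by auto
  qed
qed

lemma steady_state_stat_dist_formula:
  assumes pol: "x \<in> policies c" and lam: "lam > 0" and d: "d > 0"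
  shows "steady_state c lam d x (stat_dist_formula c lam d x)"
proof -
  let ?k = "last_blocked_level c x" and ?w = "balance_weight c lam d x"
  let ?S = "\<Sum>i=?k..c. ?w i" and ?p = "stat_dist_formula c lam d x"
  have kc: "?k \<le> c" by (rule last_blocked_level_le)
  have w_nonneg: "\<And>j. j \<le> c \<Longrightarrow> ?w j \<ge> 0" using balance_weight_nonneg[OF pol lam d] .
  have "?S \<ge> ?w ?k"
    using kc w_nonneg by (intro member_le_sum) auto
  then have S_pos: "?S > 0" by (simp add: balance_weight_last_blocked)
  have "(\<Sum>j\<le>c. ?p j) = (\<Sum>j=?k..c. ?p j)"
    unfolding stat_dist_formula_def by (intro sum.mono_neutral_right) auto
  also have "\<dots> = (\<Sum>j=?k..c. ?w j / ?S)"
    unfolding stat_dist_formula_def by simp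
  also have "\<dots> = 1" using S_pos by (simp flip: sum_divide_distrib)
  finally have sum1: "(\<Sum>j\<le>c. ?p j) = 1" .
  have balance: "?p j * lam * x j = ?p (j - 1) * real (c - j + 1) / d" if j: "j \<in> {1..c}" for j
  proof (cases "j \<le> ?k")
    case True
    then have "?p (j - 1) = 0" unfolding stat_dist_formula_def using j by auto
    moreover have "?p j * x j = 0"
      using True last_blocked_level_blocked[of c x] j unfolding stat_dist_formula_def
      by (cases "j = ?k") auto
    ultimately show ?thesis by auto
  next
    case False
    then have x_nonzero: "x j \<noteq> 0"
      using admission_nonzero_above_last_blocked[of c x j] j by simp
    obtain i where i: "j = Suc i" using j by (cases j) auto
    have "?p j * lam * x j = ?w j / ?S * lam * x j"
      using False j unfolding stat_dist_formula_def by simp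
    also have "\<dots> = ?w i / ?S * real (c - i) / d"
      using x_nonzero i lam d by (simp add: field_simps)
    also have "\<dots> = ?p (j - 1) * real (c - j + 1) / d"
      using False j i unfolding stat_dist_formula_def by (simp add: Suc_diff_le)
    finally show ?thesis .
  qed
  have "\<forall>j\<le>c. 0 \<le> ?p j"
    using w_nonneg S_pos unfolding stat_dist_formula_def by (auto intro: divide_nonneg_pos)
  moreover have "\<forall>j>c. ?p j = 0" unfolding stat_dist_formula_def by auto
  ultimately show ?thesis unfolding steady_state_def using sum1 balance by blast
qed

lemma steady_state_stat_dist:
  assumes "x \<in> policies c" "lam > 0" "d > 0"
  shows "steady_state c lam d x (stat_dist c lam d x)"
proof -
  have "stat_dist c lam d x = stat_dist_formula c lam d x"
    unfolding stat_dist_def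
    using steady_state_stat_dist_formula[OF assms] steady_state_unique[OF _ assms(2,3)]
    by (rule the_equality)
  then show ?thesis using steady_state_stat_dist_formula[OF assms] by simp
qed

text \<open>Nothing is admitted when no unit is available; the coordinate x 0 of a policy is meaningless.\<close>
definition admission :: "(nat \<Rightarrow> real) \<Rightarrow> nat \<Rightarrow> real" where
  "admission x j = (if j = 0 then 0 else x j)"

lemma steady_state_admission_sum:
  assumes st: "steady_state c lam d x p" and lam: "lam > 0" and d: "d > 0"
  shows "(\<Sum>j\<le>c. p j * admission x j) = (real c - (\<Sum>j\<le>c. real j * p j)) / (d * lam)"
proof -
  have sum1: "(\<Sum>j\<le>c. p j) = 1" using st unfolding steady_state_def by simp
  have "(\<Sum>j\<le>c. p j * admission x j) = (\<Sum>j<c. p (Suc j) * x (Suc j))"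
    unfolding lessThan_Suc_atMost[symmetric] sum.lessThan_Suc_shift by (simp add: admission_def)
  also have "\<dots> = (\<Sum>j<c. p j * real (c - j) / (d * lam))"
    using steady_state_balance[OF st] lam d by (intro sum.cong) (auto simp: field_simps)
  also have "\<dots> = (\<Sum>j\<le>c. p j * real (c - j) / (d * lam))"
    by (simp add: lessThan_Suc_atMost[symmetric])
  also have "\<dots> = (\<Sum>j\<le>c. (real c * p j - real j * p j) / (d * lam))"
    by (intro sum.cong) (auto simp: algebra_simps)
  also have "\<dots> = (real c - (\<Sum>j\<le>c. real j * p j)) / (d * lam)"
    using sum1 by (simp add: sum_subtractf flip: sum_divide_distrib sum_distrib_left)
  finally show ?thesis .
qed

lemma steady_state_mean_shortfall:
  assumes st: "steady_state c lam d x p" and lam: "lam > 0" and d: "d > 0"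
    and xstar_def: "xstar = real c / (lam * d)" and c: "0 < c"
  shows "(\<Sum>j\<le>c. p j * (xstar - admission x j)) = xstar * (\<Sum>j\<le>c. real j * p j) / real c"
proof -
  have sum1: "(\<Sum>j\<le>c. p j) = 1" using st unfolding steady_state_def by simp
  have "(\<Sum>j\<le>c. p j * (xstar - admission x j)) = xstar - (\<Sum>j\<le>c. p j * admission x j)"
    using sum1 by (simp add: right_diff_distrib sum_subtractf mult.commute flip: sum_distrib_left)
  also have "\<dots> = xstar - (real c - (\<Sum>j\<le>c. real j * p j)) / (d * lam)"
    by (rule arg_cong[OF steady_state_admission_sum[OF st lam d]])
  also have "\<dots> = xstar * (\<Sum>j\<le>c. real j * p j) / real c"
    using xstar_def c lam d by (simp add: field_simps)
  finally show ?thesis .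
qed

lemma steady_state_prob_le_shortfall:
  assumes st: "steady_state c lam d x p" and lam: "lam > 0" and d: "d > 0" and k: "k \<le> c"
    and xstar_def: "xstar = real c / (lam * d)"
  shows "xstar * p k \<le> (\<Sum>j\<le>c. p j * max 0 (xstar - admission x j))"
proof -
  have nonneg: "\<And>j. j \<le> c \<Longrightarrow> 0 \<le> p j" using st unfolding steady_state_def by simp
  text \<open>Balance gives p (k+1) x (k+1) \<le> x* p k, so x* p k grows by at most the shortfall
    p (k+1) (x* - x (k+1)) from one level to the next.\<close>
  have "xstar * p k \<le> (\<Sum>j\<le>k. p j * max 0 (xstar - admission x j))"
    using k
  proof (induction k)
    case 0
    show ?case
      using mult_right_mono[of xstar "max 0 xstar" "p 0"] nonneg[of 0]
      by (simp add: admission_def mult.commute)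
  next
    case (Suc k)
    have "p (Suc k) * x (Suc k) = p k * real (c - k) / (d * lam)"
      using steady_state_balance[OF st, of k] Suc.prems lam d by (simp add: field_simps)
    also have "\<dots> \<le> p k * real c / (d * lam)"
      using nonneg[of k] Suc.prems lam d by (intro divide_right_mono mult_left_mono) auto
    finally have "p (Suc k) * x (Suc k) \<le> xstar * p k"
      unfolding xstar_def by (simp add: field_simps)
    moreover have "p (Suc k) * (xstar - x (Suc k)) \<le> p (Suc k) * max 0 (xstar - x (Suc k))"
      using nonneg[of "Suc k"] Suc.prems by (intro mult_left_mono) auto
    ultimately show ?case
      using Suc by (simp add: admission_def algebra_simps)
  qed
  also have "\<dots> \<le> (\<Sum>j\<le>c. p j * max 0 (xstar - admission x j))"
    using k nonneg by (intro sum_mono2) auto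
  finally show ?thesis .
qed

lemma sum_truncated_diff_le:
  "(\<Sum>k\<le>c. real (n - k)) \<le> real n * (real n + 1) / 2"
proof -
  have "(\<Sum>k\<le>c. real (n - k)) = (\<Sum>k\<in>{..c}\<inter>{..<n}. real (n - k))"
    by (intro sum.mono_neutral_right) auto
  also have "\<dots> \<le> (\<Sum>k<n. real (n - k))"
    by (intro sum_mono2) auto
  also have "\<dots> = (\<Sum>i<n. real (Suc i))"
    by (rule sum.nat_diff_reindex[symmetric, THEN trans]) (simp add: Suc_diff_Suc)
  also have "\<dots> = real n * (real n + 1) / 2"
    by (induction n) (simp_all add: field_simps)
  finally show ?thesis .
qed

lemma mean_ge_of_prob_le:
  fixes p :: "nat \<Rightarrow> real"
  assumes nonneg: "\<forall>k\<le>c. 0 \<le> p k" and sum1: "(\<Sum>k\<le>c. p k) = 1"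
    and le: "\<forall>k\<le>c. p k \<le> v"
  shows "real n - v * (real n * (real n + 1) / 2) \<le> (\<Sum>k\<le>c. real k * p k)"
proof -
  have "real n * p k - real (n - k) * v \<le> real k * p k" if "k \<le> c" for k
  proof (cases "n \<le> k")
    case True
    then show ?thesis using nonneg that by (simp add: mult_right_mono)
  next
    case False
    then have "real (n - k) * p k \<le> real (n - k) * v" using le that by (intro mult_left_mono) auto
    with False show ?thesis by (simp add: algebra_simps)
  qed
  then have "(\<Sum>k\<le>c. real n * p k - real (n - k) * v) \<le> (\<Sum>k\<le>c. real k * p k)"
    by (intro sum_mono) auto
  moreover have "(\<Sum>k\<le>c. real n * p k - real (n - k) * v) = real n - v * (\<Sum>k\<le>c. real (n - k))"
    using sum1 by (simp add: sum_subtractf mult.commute flip: sum_distrib_left sum_distrib_right)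
  moreover have "v * (\<Sum>k\<le>c. real (n - k)) \<le> v * (real n * (real n + 1) / 2)"
    using nonneg le sum_truncated_diff_le by (intro mult_left_mono) (auto intro: order_trans)
  ultimately show ?thesis by linarith
qed

text \<open>2n + v (K^2 - n (n + 1)) - K is affine in v, nonnegative at v = 0 and at v = 1/K
  because n \<le> K < n + 1; for v \<ge> 1/K already K^2 v \<ge> K.\<close>
lemma tradeoff_at_floor:
  fixes m v K :: real and n :: nat
  assumes m: "0 \<le> m" and v: "0 \<le> v" and K: "1 \<le> K" and n: "real n \<le> K" "K < real n + 1"
    and mean: "real n - v * (real n * (real n + 1) / 2) \<le> m"
  shows "K \<le> 2 * m + K^2 * v"
proof (cases "1 \<le> v * K")
  case True
  then have "K \<le> K * (v * K)" using K by (simp add: mult_le_cancel_left1)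
  then show ?thesis using m by (simp add: power2_eq_square mult_ac)
next
  case False
  define t where "t = v * K"
  have t: "0 \<le> t" "t < 1" using False v K unfolding t_def by auto
  have "n \<noteq> 0" using K n by auto
  then have n1: "1 \<le> real n" by simp
  have at_zero: "0 \<le> K * (2 * real n - K)" using K n n1 by simp
  have at_inverse: "0 \<le> 2 * real n * K - real n * (real n + 1)"
    using mult_left_mono[of "real n + 1" "2 * K" "real n"] n n1 by (simp add: algebra_simps)
  have "K * (2 * real n - v * (real n * (real n + 1)) + v * K^2 - K)
      = (1 - t) * (K * (2 * real n - K)) + t * (2 * real n * K - real n * (real n + 1))"
    unfolding t_def by (simp add: algebra_simps power2_eq_square)
  also have "\<dots> \<ge> 0" using t at_zero at_inverse by simp
  finally have "K \<le> 2 * real n - v * (real n * (real n + 1)) + v * K^2"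
    using K by (simp add: zero_le_mult_iff)
  then show ?thesis using mean by (simp add: mult.commute)
qed

lemma mean_tradeoff:
  fixes p :: "nat \<Rightarrow> real" and K v :: real
  assumes nonneg: "\<forall>k\<le>c. 0 \<le> p k" and sum1: "(\<Sum>k\<le>c. p k) = 1"
    and le: "\<forall>k\<le>c. p k \<le> v" and K: "1 \<le> K"
  shows "K \<le> 2 * (\<Sum>k\<le>c. real k * p k) + K^2 * v"
proof (rule tradeoff_at_floor)
  show "0 \<le> (\<Sum>k\<le>c. real k * p k)" using nonneg by (intro sum_nonneg) auto
  show "0 \<le> v" using nonneg le by force
  show "real (nat \<lfloor>K\<rfloor>) \<le> K" "K < real (nat \<lfloor>K\<rfloor>) + 1" using K by linarith+
  show "real (nat \<lfloor>K\<rfloor>) - v * (real (nat \<lfloor>K\<rfloor>) * (real (nat \<lfloor>K\<rfloor>) + 1) / 2)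
      \<le> (\<Sum>k\<le>c. real k * p k)"
    by (rule mean_ge_of_prob_le[OF nonneg sum1 le])
qed (fact K)

lemma expected_gap_ge_shortfalls:
  fixes p :: "nat \<Rightarrow> real" and g :: "real \<Rightarrow> real"
  assumes nonneg: "\<forall>j\<le>c. 0 \<le> p j" and sum1: "(\<Sum>j\<le>c. p j) = 1"
    and pol: "x \<in> policies c" and g0: "g 0 = 0"
    and bound: "\<forall>z\<in>{0..1}. g z \<le> min (R * z + g xstar - R * xstar) (r * z + g xstar - r * xstar)"
  shows "r * (\<Sum>j\<le>c. p j * (xstar - admission x j))
           + (R - r) * (\<Sum>j\<le>c. p j * max 0 (xstar - admission x j))
         \<le> g xstar - (\<Sum>j=1..c. p j * g (x j))"
proof -
  have gap: "r * (xstar - z) + (R - r) * max 0 (xstar - z) \<le> g xstar - g z" if "z \<in> {0..1}" for z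
    using bound that by (cases "z \<le> xstar") (auto simp: algebra_simps)
  have "admission x j \<in> {0..1}" if "j \<le> c" for j
    using pol that unfolding policies_def admission_def by auto
  then have "(\<Sum>j\<le>c. p j * (r * (xstar - admission x j) + (R - r) * max 0 (xstar - admission x j)))
      \<le> (\<Sum>j\<le>c. p j * (g xstar - g (admission x j)))"
    using nonneg gap by (intro sum_mono mult_left_mono) auto
  also have "\<dots> = g xstar - (\<Sum>j\<le>c. p j * g (admission x j))"
    using sum1 by (simp add: right_diff_distrib sum_subtractf flip: sum_distrib_right)
  also have "(\<Sum>j\<le>c. p j * g (admission x j)) = (\<Sum>j=1..c. p j * g (x j))"
  proof -
    have "{..c} = insert 0 {1..c}" by auto
    then show ?thesis using g0 by (simp add: admission_def)
  qed
  finally show ?thesis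
    by (simp add: distrib_left sum.distrib sum_distrib_left mult.left_commute)
qed

lemma steady_state_loss_bound:
  fixes c :: nat and lam d xstar R r :: real and g :: "real \<Rightarrow> real"
  assumes st: "steady_state c lam d x p" and pol: "x \<in> policies c"
    and lam: "lam > 0" and d: "d > 0" and xstar_def: "xstar = real c / (lam * d)"
    and g0: "g 0 = 0" and r: "0 < r" and rR: "r < R"
    and bound: "\<forall>z\<in>{0..1}. g z \<le> min (R * z + g xstar - R * xstar) (r * z + g xstar - r * xstar)"
    and c_ge: "real c \<ge> 1 / (R - r)"
  shows "lam * min 1 (r / 2) * xstar * sqrt ((R - r) / real c)
           \<le> lam * g xstar - (\<Sum>j=1..c. p j * lam * g (x j))"
proof -
  define \<delta> where "\<delta> = R - r"
  define m where "m = (\<Sum>j\<le>c. real j * p j)"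
  define v where "v = (\<Sum>j\<le>c. p j * max 0 (xstar - admission x j)) / xstar"
  define K where "K = sqrt (real c * \<delta>)"
  define \<rho> where "\<rho> = min 1 (r / 2)"
  have nonneg: "\<forall>j\<le>c. 0 \<le> p j" and sum1: "(\<Sum>j\<le>c. p j) = 1"
    using st unfolding steady_state_def by auto
  have c\<delta>: "1 \<le> real c * \<delta>" using c_ge rR unfolding \<delta>_def by (simp add: field_simps)
  then have c_pos: "0 < real c" by (cases "c = 0") auto
  have xstar_pos: "0 < xstar" using c_pos lam d xstar_def by simp
  have mean_shortfall: "(\<Sum>j\<le>c. p j * (xstar - admission x j)) = xstar * m / real c"
    unfolding m_def using steady_state_mean_shortfall[OF st lam d xstar_def] c_pos by simp
  have prob_le: "\<forall>k\<le>c. p k \<le> v"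
    using steady_state_prob_le_shortfall[OF st lam d _ xstar_def] xstar_pos
    unfolding v_def by (simp add: field_simps)
  have tradeoff: "K \<le> 2 * m + K^2 * v"
    unfolding m_def using c\<delta> by (intro mean_tradeoff[OF nonneg sum1 prob_le]) (simp add: K_def)
  have mv: "0 \<le> m" "0 \<le> v"
    using nonneg xstar_pos unfolding m_def v_def by (auto intro!: sum_nonneg divide_nonneg_pos)
  have \<rho>: "0 \<le> \<rho>" "\<rho> \<le> 1" "2 * \<rho> \<le> r" using r unfolding \<rho>_def by auto
  have "\<rho> * K \<le> \<rho> * (2 * m + K^2 * v)"
    using tradeoff \<rho> by (intro mult_left_mono) auto
  also have "\<dots> = (2 * \<rho>) * m + \<rho> * (real c * \<delta> * v)"
    using c\<delta> unfolding K_def by (simp add: algebra_simps)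
  also have "\<dots> \<le> r * m + real c * \<delta> * v"
    using \<rho> mv c\<delta> by (intro add_mono mult_right_mono mult_left_le_one_le) auto
  finally have key: "\<rho> * K \<le> r * m + real c * \<delta> * v" .
  have "sqrt (\<delta> / real c) = K / real c"
    using c_pos c\<delta> unfolding K_def
    by (simp add: real_sqrt_mult real_sqrt_divide field_simps)
  then have "lam * \<rho> * xstar * sqrt (\<delta> / real c) = lam * xstar / real c * (\<rho> * K)" by simp
  also have "\<dots> \<le> lam * xstar / real c * (r * m + real c * \<delta> * v)"
    using key lam xstar_pos c_pos by (intro mult_left_mono) auto
  also have "\<dots> = lam * (r * (xstar * m / real c) + \<delta> * (xstar * v))"
    using c_pos by (simp add: field_simps)
  also have "\<dots> \<le> lam * (g xstar - (\<Sum>j=1..c. p j * g (x j)))"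
    using expected_gap_ge_shortfalls[OF nonneg sum1 pol g0 bound] lam xstar_pos
    unfolding mean_shortfall v_def \<delta>_def by (intro mult_left_mono) auto
  also have "\<dots> = lam * g xstar - (\<Sum>j=1..c. p j * lam * g (x j))"
    by (simp add: right_diff_distrib sum_distrib_left mult_ac)
  finally show ?thesis unfolding \<rho>_def \<delta>_def .
qed

theorem lemma5:
  fixes c :: nat and lam d xstar R r :: real and g :: "real \<Rightarrow> real"
  assumes lam: "lam > 0" and d: "d > 0"
    and xstar_def: "xstar = real c / (lam * d)"
    and xstar_pos: "0 < xstar" and xstar_lt: "xstar < 1"
    and concave: "concave_on {0..1} g"
    and mono: "mono_on {0..1} g"
    and g0: "g 0 = 0"
    and r: "0 < r" and rR: "r < R"
    and bound: "\<forall>x\<in>{0..1}. g x \<le> min (R * x + g xstar - R * xstar) (r * x + g xstar - r * xstar)"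
    and c_ge: "real c \<ge> 1 / (R - r)"
  shows "lam * g xstar - (SUP x\<in>policies c. avg_reward c lam d g x)
           \<ge> lam * min 1 (r / 2) * xstar * sqrt ((R - r) / real c)"
proof -
  let ?B = "lam * min 1 (r / 2) * xstar * sqrt ((R - r) / real c)"
  have "(\<lambda>_. 0) \<in> policies c" unfolding policies_def by simp
  then have "(SUP x\<in>policies c. avg_reward c lam d g x) \<le> lam * g xstar - ?B"
  proof (intro cSUP_least)
    fix x assume "x \<in> policies c"
    then show "avg_reward c lam d g x \<le> lam * g xstar - ?B"
      using steady_state_loss_bound[OF steady_state_stat_dist[OF _ lam d] _ lam d
          xstar_def g0 r rR bound c_ge]
      unfolding avg_reward_def by force
  qed auto
  then show ?thesis by linarith
qed

end
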